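(* Let $M$ be a commutative and cocommutative Hopf algebra over $\mathbb{C}$, let $A$ be a commutative $\mathbb{C}$-algebra, and let $r_1,r_2$ be $A$-valued bicharacters on $M$. If $r=r_1\circ r_2$, then \[ \mathrm{EQ}_{r}=\mathrm{EQ}_{r_1}\circ\mathrm{EQ}_{r_2}. \]
   Context: For a Hopf algebra $M$ with coproduct $\Delta$ and counit $\eta$, Sweedler notation is used: $\Delta(a)=\sum a'\otimes a''$, $\Delta^2(a)=\sum a'\otimes a''\otimes a'''$. An $A$-valued bicharacter on $M$ is a linear map $r:M\otimes M\to A$ such that for all $a,b,c\in M$: $r(1\otimes a)=\eta(a)=r(a\otimes 1)$, $r(ab\otimes c)=\sum r(a\otimes c')r(b\otimes c'')$, and $r(a\otimes bc)=\sum r(a'\otimes b)r(a''\otimes c)$. The convolution of bicharacters is $(r_1\circ r_2)(a\otimes b)=\sum r_1(a'\otimes b')r_2(a''\otimes b'')$. Write $M_A=M\otimes_{\mathbb{C}}A$. The map $\mathrm{EQ}_r:M\to M_A$ is $\mathrm{EQ}_r(m)=\sum r(m'\otimes m'')m'''$, extended $A$-linearly to $M_A\to M_A$; the composition $\mathrm{EQ}_{r_1}\circ\mathrm{EQ}_{r_2}$ uses this $A$-linear extension of $\mathrm{EQ}_{r_1}$. *)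

theory Defs
  imports Complex_Main
begin

text \<open>The Hopf algebra M over the complex numbers is represented by a basis: M is the
space of finitely supported functions 'b => complex (every complex vector space is of
this form).  M (x) M and M (x) M (x) M are then finitely supported functions on
'b * 'b and 'b * 'b * 'b.  The structure maps are given on basis elements and extended
linearly.  A commutative C-algebra A is a commutative ring 'a with a ring homomorphism
iota : complex => 'a; M_A = M (x) A is the space of finitely supported 'b => 'a.
A linear map M (x) M -> A is given by its values r x y on basis pairs.\<close>

definition supp :: "('x \<Rightarrow> 'c::zero) \<Rightarrow> 'x set" where
  "supp f = {x. f x \<noteq> 0}"

definition fs :: "('x \<Rightarrow> 'c::zero) \<Rightarrow> bool" where
  "fs f \<longleftrightarrow> finite (supp f)"

definition ind :: "'b \<Rightarrow> 'b \<Rightarrow> complex" where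
  "ind b = (\<lambda>z. if z = b then 1 else 0)"

definition tens :: "('b \<Rightarrow> complex) \<Rightarrow> ('b \<Rightarrow> complex) \<Rightarrow> ('b \<times> 'b \<Rightarrow> complex)" where
  "tens f g = (\<lambda>(x, y). f x * g y)"

definition mult :: "('b \<Rightarrow> 'b \<Rightarrow> 'b \<Rightarrow> complex) \<Rightarrow> ('b \<Rightarrow> complex) \<Rightarrow> ('b \<Rightarrow> complex) \<Rightarrow> ('b \<Rightarrow> complex)" where
  "mult mu f g = (\<lambda>z. \<Sum>x\<in>supp f. \<Sum>y\<in>supp g. f x * g y * mu x y z)"

definition comult :: "('b \<Rightarrow> 'b \<times> 'b \<Rightarrow> complex) \<Rightarrow> ('b \<Rightarrow> complex) \<Rightarrow> ('b \<times> 'b \<Rightarrow> complex)" where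
  "comult delta f = (\<lambda>p. \<Sum>a\<in>supp f. f a * delta a p)"

definition counit :: "('b \<Rightarrow> complex) \<Rightarrow> ('b \<Rightarrow> complex) \<Rightarrow> complex" where
  "counit eps f = (\<Sum>a\<in>supp f. f a * eps a)"

definition mult2 :: "('b \<Rightarrow> 'b \<Rightarrow> 'b \<Rightarrow> complex) \<Rightarrow> ('b \<times> 'b \<Rightarrow> complex) \<Rightarrow> ('b \<times> 'b \<Rightarrow> complex) \<Rightarrow> ('b \<times> 'b \<Rightarrow> complex)" where
  "mult2 mu F G = (\<lambda>(z, w). \<Sum>(x, y)\<in>supp F. \<Sum>(x', y')\<in>supp G.
      F (x, y) * G (x', y') * mu x x' z * mu y y' w)"

definition delta_id :: "('b \<Rightarrow> 'b \<times> 'b \<Rightarrow> complex) \<Rightarrow> ('b \<times> 'b \<Rightarrow> complex) \<Rightarrow> ('b \<times> 'b \<times> 'b \<Rightarrow> complex)" where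
  "delta_id delta F = (\<lambda>(x, y, z). \<Sum>(u, v)\<in>supp F. F (u, v) * delta u (x, y) * ind v z)"

definition id_delta :: "('b \<Rightarrow> 'b \<times> 'b \<Rightarrow> complex) \<Rightarrow> ('b \<times> 'b \<Rightarrow> complex) \<Rightarrow> ('b \<times> 'b \<times> 'b \<Rightarrow> complex)" where
  "id_delta delta F = (\<lambda>(x, y, z). \<Sum>(u, v)\<in>supp F. F (u, v) * ind u x * delta v (y, z))"

definition eps_id :: "('b \<Rightarrow> complex) \<Rightarrow> ('b \<times> 'b \<Rightarrow> complex) \<Rightarrow> ('b \<Rightarrow> complex)" where
  "eps_id eps F = (\<lambda>z. \<Sum>(u, v)\<in>supp F. F (u, v) * eps u * ind v z)"

definition id_eps :: "('b \<Rightarrow> complex) \<Rightarrow> ('b \<times> 'b \<Rightarrow> complex) \<Rightarrow> ('b \<Rightarrow> complex)" where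
  "id_eps eps F = (\<lambda>z. \<Sum>(u, v)\<in>supp F. F (u, v) * ind u z * eps v)"

definition mult_S_id :: "('b \<Rightarrow> 'b \<Rightarrow> 'b \<Rightarrow> complex) \<Rightarrow> ('b \<Rightarrow> 'b \<Rightarrow> complex) \<Rightarrow> ('b \<times> 'b \<Rightarrow> complex) \<Rightarrow> ('b \<Rightarrow> complex)" where
  "mult_S_id mu S F = (\<lambda>z. \<Sum>(u, v)\<in>supp F. F (u, v) * mult mu (S u) (ind v) z)"

definition mult_id_S :: "('b \<Rightarrow> 'b \<Rightarrow> 'b \<Rightarrow> complex) \<Rightarrow> ('b \<Rightarrow> 'b \<Rightarrow> complex) \<Rightarrow> ('b \<times> 'b \<Rightarrow> complex) \<Rightarrow> ('b \<Rightarrow> complex)" where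
  "mult_id_S mu S F = (\<lambda>z. \<Sum>(u, v)\<in>supp F. F (u, v) * mult mu (ind u) (S v) z)"

definition hopf_algebra ::
  "('b \<Rightarrow> 'b \<Rightarrow> 'b \<Rightarrow> complex) \<Rightarrow> ('b \<Rightarrow> complex) \<Rightarrow> ('b \<Rightarrow> 'b \<times> 'b \<Rightarrow> complex)
   \<Rightarrow> ('b \<Rightarrow> complex) \<Rightarrow> ('b \<Rightarrow> 'b \<Rightarrow> complex) \<Rightarrow> bool" where
  "hopf_algebra mu one delta eps S \<longleftrightarrow>
     (\<forall>x y. fs (mu x y)) \<and> fs one \<and> (\<forall>a. fs (delta a)) \<and> (\<forall>a. fs (S a)) \<and>
     (\<forall>f g h. fs f \<longrightarrow> fs g \<longrightarrow> fs h \<longrightarrow>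
        mult mu (mult mu f g) h = mult mu f (mult mu g h)) \<and>
     (\<forall>f. fs f \<longrightarrow> mult mu one f = f \<and> mult mu f one = f) \<and>
     (\<forall>f. fs f \<longrightarrow> delta_id delta (comult delta f) = id_delta delta (comult delta f)) \<and>
     (\<forall>f. fs f \<longrightarrow> eps_id eps (comult delta f) = f \<and> id_eps eps (comult delta f) = f) \<and>
     (\<forall>f g. fs f \<longrightarrow> fs g \<longrightarrow>
        comult delta (mult mu f g) = mult2 mu (comult delta f) (comult delta g)) \<and>
     comult delta one = tens one one \<and>
     (\<forall>f g. fs f \<longrightarrow> fs g \<longrightarrow> counit eps (mult mu f g) = counit eps f * counit eps g) \<and>
     counit eps one = 1 \<and>
     (\<forall>f. fs f \<longrightarrow>
        mult_S_id mu S (comult delta f) = (\<lambda>z. counit eps f * one z) \<and>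
        mult_id_S mu S (comult delta f) = (\<lambda>z. counit eps f * one z))"

definition commutative :: "('b \<Rightarrow> 'b \<Rightarrow> 'b \<Rightarrow> complex) \<Rightarrow> bool" where
  "commutative mu \<longleftrightarrow> (\<forall>f g. fs f \<longrightarrow> fs g \<longrightarrow> mult mu f g = mult mu g f)"

definition cocommutative :: "('b \<Rightarrow> 'b \<times> 'b \<Rightarrow> complex) \<Rightarrow> bool" where
  "cocommutative delta \<longleftrightarrow>
     (\<forall>f. fs f \<longrightarrow> (\<forall>x y. comult delta f (x, y) = comult delta f (y, x)))"

definition calg_hom :: "(complex \<Rightarrow> 'a::comm_ring_1) \<Rightarrow> bool" where
  "calg_hom iota \<longleftrightarrow> iota 1 = 1 \<and> (\<forall>x y. iota (x + y) = iota x + iota y) \<and>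
     (\<forall>x y. iota (x * y) = iota x * iota y)"

definition rlin :: "(complex \<Rightarrow> 'a::comm_ring_1) \<Rightarrow> ('b \<Rightarrow> 'b \<Rightarrow> 'a) \<Rightarrow> ('b \<times> 'b \<Rightarrow> complex) \<Rightarrow> 'a" where
  "rlin iota r F = (\<Sum>(u, v)\<in>supp F. iota (F (u, v)) * r u v)"

definition bicharacter ::
  "('b \<Rightarrow> 'b \<Rightarrow> 'b \<Rightarrow> complex) \<Rightarrow> ('b \<Rightarrow> complex) \<Rightarrow> ('b \<Rightarrow> 'b \<times> 'b \<Rightarrow> complex)
   \<Rightarrow> ('b \<Rightarrow> complex) \<Rightarrow> (complex \<Rightarrow> 'a::comm_ring_1) \<Rightarrow> ('b \<Rightarrow> 'b \<Rightarrow> 'a) \<Rightarrow> bool" where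
  "bicharacter mu one delta eps iota r \<longleftrightarrow>
     (\<forall>a. fs a \<longrightarrow> rlin iota r (tens one a) = iota (counit eps a) \<and>
                  rlin iota r (tens a one) = iota (counit eps a)) \<and>
     (\<forall>a b c. fs a \<longrightarrow> fs b \<longrightarrow> fs c \<longrightarrow>
        rlin iota r (tens (mult mu a b) c) =
          (\<Sum>(u, v)\<in>supp (comult delta c).
             iota (comult delta c (u, v)) * rlin iota r (tens a (ind u)) * rlin iota r (tens b (ind v)))) \<and>
     (\<forall>a b c. fs a \<longrightarrow> fs b \<longrightarrow> fs c \<longrightarrow>
        rlin iota r (tens a (mult mu b c)) =
          (\<Sum>(u, v)\<in>supp (comult delta a).
             iota (comult delta a (u, v)) * rlin iota r (tens (ind u) b) * rlin iota r (tens (ind v) c)))"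

definition conv :: "(complex \<Rightarrow> 'a::comm_ring_1) \<Rightarrow> ('b \<Rightarrow> 'b \<times> 'b \<Rightarrow> complex)
   \<Rightarrow> ('b \<Rightarrow> 'b \<Rightarrow> 'a) \<Rightarrow> ('b \<Rightarrow> 'b \<Rightarrow> 'a) \<Rightarrow> ('b \<Rightarrow> 'b \<Rightarrow> 'a)" where
  "conv iota delta r1 r2 = (\<lambda>x y.
     \<Sum>(u, v)\<in>supp (delta x). \<Sum>(u', v')\<in>supp (delta y).
       iota (delta x (u, v)) * iota (delta y (u', v')) * r1 u u' * r2 v v')"

definition comult2 :: "('b \<Rightarrow> 'b \<times> 'b \<Rightarrow> complex) \<Rightarrow> ('b \<Rightarrow> complex) \<Rightarrow> ('b \<times> 'b \<times> 'b \<Rightarrow> complex)" where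
  "comult2 delta m = delta_id delta (comult delta m)"

definition EQ :: "(complex \<Rightarrow> 'a::comm_ring_1) \<Rightarrow> ('b \<Rightarrow> 'b \<times> 'b \<Rightarrow> complex)
   \<Rightarrow> ('b \<Rightarrow> 'b \<Rightarrow> 'a) \<Rightarrow> ('b \<Rightarrow> complex) \<Rightarrow> ('b \<Rightarrow> 'a)" where
  "EQ iota delta r m = (\<lambda>z. \<Sum>(x, y, w)\<in>supp (comult2 delta m).
      iota (comult2 delta m (x, y, w)) * r x y * iota (ind w z))"

definition EQ_A :: "(complex \<Rightarrow> 'a::comm_ring_1) \<Rightarrow> ('b \<Rightarrow> 'b \<times> 'b \<Rightarrow> complex)
   \<Rightarrow> ('b \<Rightarrow> 'b \<Rightarrow> 'a) \<Rightarrow> ('b \<Rightarrow> 'a) \<Rightarrow> ('b \<Rightarrow> 'a)" where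
  "EQ_A iota delta r F = (\<lambda>z. \<Sum>b\<in>supp F. F b * EQ iota delta r (ind b) z)"

end

theory Submission
  imports Defs
begin

text \<open>Writing both sides in the basis, each becomes a sum of terms r1(u, u') r2(v, v') with a
  coefficient taken from a fourfold iterated coproduct of m: the left side reads off the factors
  in the order u, v, u', v', the right side in the order v, v', u, u'.  By coassociativity all
  iterated coproducts agree, and by cocommutativity the coefficients are invariant under
  permuting the tensor factors, so the two sides coincide.  Neither the algebra structure nor
  the bicharacter property of r1, r2 enters.\<close>

lemma sum_supp_superset:
  assumes "finite S" "supp F \<subseteq> S" "\<And>p. F p = 0 \<Longrightarrow> g p = 0"
  shows "sum g (supp F) = sum g S"
  by (rule sum.mono_neutral_left) (use assms in \<open>auto simp: supp_def\<close>)

lemma supp_ind: "supp (ind a) = {a}"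
  by (auto simp: supp_def ind_def)

lemma fs_ind: "fs (ind a)"
  by (simp add: fs_def supp_ind)

lemma comult_ind: "comult delta (ind a) = delta a"
  unfolding comult_def supp_ind by (simp add: ind_def)

lemma cocommutative_delta_symmetric:
  assumes "cocommutative delta"
  shows "delta a (x, y) = delta a (y, x)"
  using assms fs_ind[of a] by (simp add: cocommutative_def flip: comult_ind[of delta a])

lemma calg_hom_zero: "calg_hom iota \<Longrightarrow> iota 0 = 0"
  unfolding calg_hom_def by (metis add_cancel_right_right add_0)

lemma calg_hom_mult: "calg_hom iota \<Longrightarrow> iota (x * y) = iota x * iota y"
  by (simp add: calg_hom_def)

lemma calg_hom_sum: "calg_hom iota \<Longrightarrow> iota (sum f A) = (\<Sum>x\<in>A. iota (f x))"
proof (induction A rule: infinite_finite_induct)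
  case (insert x F)
  then show ?case by (simp add: calg_hom_def)
qed (simp_all add: calg_hom_zero)

lemma calg_hom_ind: "calg_hom iota \<Longrightarrow> iota (ind w z) = (if z = w then 1 else 0)"
  by (simp add: ind_def calg_hom_def calg_hom_zero)

lemma sum_Times_nested: "(\<Sum>(x, y)\<in>A \<times> B. g x y) = (\<Sum>x\<in>A. \<Sum>y\<in>B. g x y)"
  by (simp add: sum.cartesian_product)

lemma sum_move_outer_inside4:
  "(\<Sum>y\<in>B. \<Sum>u\<in>C1. \<Sum>v\<in>C2. \<Sum>u'\<in>C3. \<Sum>v'\<in>C4. f y u v u' v') =
   (\<Sum>u\<in>C1. \<Sum>v\<in>C2. \<Sum>u'\<in>C3. \<Sum>v'\<in>C4. \<Sum>y\<in>B. f y u v u' v')"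
  by (subst sum.swap, rule sum.cong[OF refl], subst sum.swap, rule sum.cong[OF refl],
      subst sum.swap, rule sum.cong[OF refl], rule sum.swap)

lemma sum_move_outer2_inside4:
  "(\<Sum>x\<in>A. \<Sum>y\<in>B. \<Sum>u\<in>C1. \<Sum>v\<in>C2. \<Sum>u'\<in>C3. \<Sum>v'\<in>C4. f x y u v u' v') =
   (\<Sum>u\<in>C1. \<Sum>v\<in>C2. \<Sum>u'\<in>C3. \<Sum>v'\<in>C4. \<Sum>x\<in>A. \<Sum>y\<in>B. f x y u v u' v')"
  by (subst sum_move_outer_inside4)
    (rule sum_move_outer_inside4[where f = "\<lambda>x u v u' v'. \<Sum>y\<in>B. f x y u v u' v'"])

lemma sum_move_inner_outside3:
  "(\<Sum>x\<in>A. \<Sum>y\<in>B. \<Sum>w\<in>C. f x y w) = (\<Sum>w\<in>C. \<Sum>x\<in>A. \<Sum>y\<in>B. f x y w)"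
proof -
  have "(\<Sum>x\<in>A. \<Sum>y\<in>B. \<Sum>w\<in>C. f x y w) = (\<Sum>x\<in>A. \<Sum>w\<in>C. \<Sum>y\<in>B. f x y w)"
    by (rule sum.cong[OF refl]) (rule sum.swap)
  also have "\<dots> = (\<Sum>w\<in>C. \<Sum>x\<in>A. \<Sum>y\<in>B. f x y w)"
    by (rule sum.swap)
  finally show ?thesis .
qed

lemma delta_id_eq_sum:
  assumes "finite S" "supp F \<subseteq> S \<times> S"
  shows "delta_id delta F (x, y, w) = (\<Sum>u\<in>S. F (u, w) * delta u (x, y))"
proof -
  have "delta_id delta F (x, y, w) = (\<Sum>u\<in>S. \<Sum>v\<in>S. F (u, v) * delta u (x, y) * ind v w)"
    unfolding delta_id_def sum.cartesian_product
    by (simp, rule sum_supp_superset) (use assms in auto)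
  also have "\<dots> = (\<Sum>u\<in>S. F (u, w) * delta u (x, y))"
    using assms by (intro sum.cong refl) (auto simp: ind_def supp_def if_distrib cong: if_cong)
  finally show ?thesis .
qed

lemma id_delta_eq_sum:
  assumes "finite S" "supp F \<subseteq> S \<times> S"
  shows "id_delta delta F (x, y, z) = (\<Sum>v\<in>S. F (x, v) * delta v (y, z))"
proof -
  have "id_delta delta F (x, y, z) = (\<Sum>u\<in>S. \<Sum>v\<in>S. F (u, v) * ind u x * delta v (y, z))"
    unfolding id_delta_def sum.cartesian_product
    by (simp, rule sum_supp_superset) (use assms in auto)
  also have "\<dots> = (\<Sum>v\<in>S. \<Sum>u\<in>S. F (u, v) * ind u x * delta v (y, z))"
    by (rule sum.swap)
  also have "\<dots> = (\<Sum>v\<in>S. \<Sum>u\<in>S. if x = u then F (u, v) * delta v (y, z) else 0)"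
    by (intro sum.cong refl) (simp add: ind_def)
  also have "\<dots> = (\<Sum>v\<in>S. F (x, v) * delta v (y, z))"
    using assms by (intro sum.cong refl) (auto simp: supp_def sum.delta)
  finally show ?thesis .
qed

lemma coassoc_coords:
  assumes "delta_id delta (comult delta f) = id_delta delta (comult delta f)"
    and "finite S" "supp (comult delta f) \<subseteq> S \<times> S"
  shows "(\<Sum>v\<in>S. comult delta f (x, v) * delta v (y, z)) =
         (\<Sum>u\<in>S. comult delta f (u, z) * delta u (x, y))"
  using fun_cong[OF assms(1), of "(x, y, z)"]
  by (simp add: delta_id_eq_sum[OF assms(2,3)] id_delta_eq_sum[OF assms(2,3)])

lemma EQ_eq_sum:
  assumes hom: "calg_hom iota" and S: "finite S" "supp (comult delta f) \<subseteq> S \<times> S"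
    and delta_S: "\<And>u w. comult delta f (u, w) \<noteq> 0 \<Longrightarrow> supp (delta u) \<subseteq> S \<times> S"
  shows "EQ iota delta r f z = (\<Sum>x\<in>S. \<Sum>y\<in>S. iota (comult2 delta f (x, y, z)) * r x y)"
proof -
  have comult2_eq: "comult2 delta f (x, y, w) = (\<Sum>u\<in>S. comult delta f (u, w) * delta u (x, y))"
    for x y w
    unfolding comult2_def by (rule delta_id_eq_sum[OF S])
  have supp_comult2: "supp (comult2 delta f) \<subseteq> S \<times> S \<times> S"
  proof
    fix p assume "p \<in> supp (comult2 delta f)"
    moreover obtain x y w where p: "p = (x, y, w)" by (cases p)
    ultimately have "(\<Sum>u\<in>S. comult delta f (u, w) * delta u (x, y)) \<noteq> 0"
      by (simp add: supp_def comult2_eq)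
    then obtain u where "comult delta f (u, w) * delta u (x, y) \<noteq> 0"
      by (rule sum.not_neutral_contains_not_neutral)
    then have "comult delta f (u, w) \<noteq> 0" "delta u (x, y) \<noteq> 0"
      by auto
    with S(2) delta_S show "p \<in> S \<times> S \<times> S"
      unfolding p supp_def by blast
  qed
  have "EQ iota delta r f z =
      (\<Sum>x\<in>S. \<Sum>y\<in>S. \<Sum>w\<in>S. iota (comult2 delta f (x, y, w)) * r x y * iota (ind w z))"
    unfolding EQ_def sum.cartesian_product
    by (simp, rule sum_supp_superset) (use S supp_comult2 calg_hom_zero[OF hom] in auto)
  also have "\<dots> = (\<Sum>x\<in>S. \<Sum>y\<in>S. iota (comult2 delta f (x, y, z)) * r x y)"
  proof (intro sum.cong refl)
    fix x y
    have "(\<Sum>w\<in>S. iota (comult2 delta f (x, y, w)) * r x y * iota (ind w z)) =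
        (\<Sum>w\<in>S. if z = w then iota (comult2 delta f (x, y, w)) * r x y else 0)"
      by (intro sum.cong refl) (simp add: calg_hom_ind[OF hom])
    moreover have "z \<notin> S \<Longrightarrow> comult2 delta f (x, y, z) = 0"
      using supp_comult2 by (auto simp: supp_def)
    ultimately show "(\<Sum>w\<in>S. iota (comult2 delta f (x, y, w)) * r x y * iota (ind w z)) =
        iota (comult2 delta f (x, y, z)) * r x y"
      using S(1) by (simp add: calg_hom_zero[OF hom] sum.delta)
  qed
  finally show ?thesis .
qed

lemma conv_eq_sum:
  assumes hom: "calg_hom iota" and "finite S" "supp (delta x) \<subseteq> S \<times> S" "supp (delta y) \<subseteq> S \<times> S"
  shows "conv iota delta r1 r2 x y = (\<Sum>u\<in>S. \<Sum>v\<in>S. \<Sum>u'\<in>S. \<Sum>v'\<in>S.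
     iota (delta x (u, v)) * iota (delta y (u', v')) * r1 u u' * r2 v v')"
proof -
  have "conv iota delta r1 r2 x y = (\<Sum>(u, v)\<in>supp (delta x). \<Sum>(u', v')\<in>S \<times> S.
       iota (delta x (u, v)) * iota (delta y (u', v')) * r1 u u' * r2 v v')"
    unfolding conv_def
    by (intro sum.cong refl, clarsimp, rule sum_supp_superset) (use assms in \<open>auto simp: calg_hom_zero\<close>)
  also have "\<dots> = (\<Sum>(u, v)\<in>S \<times> S. \<Sum>(u', v')\<in>S \<times> S.
       iota (delta x (u, v)) * iota (delta y (u', v')) * r1 u u' * r2 v v')"
    by (rule sum_supp_superset) (use assms in \<open>auto simp: calg_hom_zero\<close>)
  finally show ?thesis by (simp add: sum_Times_nested)
qed

locale cocomm_coalgebra_elt =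
  fixes delta :: "'b \<Rightarrow> 'b \<times> 'b \<Rightarrow> complex" and m :: "'b \<Rightarrow> complex"
  assumes fs_delta: "\<And>a. fs (delta a)" and fs_m: "fs m"
    and coassoc: "\<And>f. fs f \<Longrightarrow> delta_id delta (comult delta f) = id_delta delta (comult delta f)"
    and cocomm: "\<And>a x y. delta a (x, y) = delta a (y, x)"
begin

definition coproduct_closure :: "'b set \<Rightarrow> 'b set" where
  "coproduct_closure X = X \<union> (\<Union>a\<in>X. fst ` supp (delta a) \<union> snd ` supp (delta a))"

definition layer :: "nat \<Rightarrow> 'b set" where
  "layer n = (coproduct_closure ^^ n) (supp m)"

text \<open>The closure of the support of m under taking coproduct components may be infinite, but
  every basis element occurring in the computation is at most five coproducts away from it, so
  all sums can be taken over the finite set T.\<close>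
abbreviation T :: "'b set" where
  "T \<equiv> layer 5"

lemma finite_layer: "finite (layer n)"
proof (induction n)
  case 0
  then show ?case using fs_m by (simp add: layer_def fs_def)
next
  case (Suc n)
  have "finite (coproduct_closure (layer n))"
    unfolding coproduct_closure_def using Suc fs_delta by (auto simp: fs_def)
  then show ?case by (simp add: layer_def)
qed

lemma layer_mono: "n \<le> k \<Longrightarrow> layer n \<subseteq> layer k"
  by (rule lift_Suc_mono_le[of layer]) (auto simp: layer_def coproduct_closure_def)

lemma supp_delta_layer: "a \<in> layer n \<Longrightarrow> supp (delta a) \<subseteq> layer (Suc n) \<times> layer (Suc n)"
  unfolding layer_def coproduct_closure_def by force

lemma supp_delta_T: "a \<in> layer n \<Longrightarrow> n \<le> 4 \<Longrightarrow> supp (delta a) \<subseteq> T \<times> T"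
  using supp_delta_layer[of a n] layer_mono[of "Suc n" 5] by auto

lemma supp_comult_m: "supp (comult delta m) \<subseteq> layer 1 \<times> layer 1"
proof
  fix p assume "p \<in> supp (comult delta m)"
  then obtain a where "a \<in> supp m" "m a * delta a p \<noteq> 0"
    unfolding comult_def supp_def by (auto elim: sum.not_neutral_contains_not_neutral)
  then show "p \<in> layer 1 \<times> layer 1"
    using supp_delta_layer[of a 0] by (auto simp: layer_def supp_def)
qed

lemma supp_comult_m_T: "supp (comult delta m) \<subseteq> T \<times> T"
  using supp_comult_m layer_mono[of 1 5] by auto

lemma comult2_m_nonzero:
  assumes "comult2 delta m (x, y, z) \<noteq> 0"
  shows "x \<in> layer 2" "y \<in> layer 2" "z \<in> layer 1"
proof -
  obtain u where "comult delta m (u, z) * delta u (x, y) \<noteq> 0"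
    using assms unfolding comult2_def delta_id_eq_sum[OF finite_layer supp_comult_m_T]
    by (rule sum.not_neutral_contains_not_neutral)
  then show "x \<in> layer 2" "y \<in> layer 2" "z \<in> layer 1"
    using supp_comult_m supp_delta_layer[of u 1] by (auto simp: supp_def numeral_2_eq_2)
qed

lemma coassoc_m:
  "(\<Sum>v\<in>T. comult delta m (x, v) * delta v (y, z)) = (\<Sum>u\<in>T. comult delta m (u, z) * delta u (x, y))"
  by (rule coassoc_coords[OF coassoc[OF fs_m] finite_layer supp_comult_m_T])

lemma coassoc_basis:
  assumes "a \<in> layer n" "n \<le> 4"
  shows "(\<Sum>v\<in>T. delta a (x, v) * delta v (y, z)) = (\<Sum>u\<in>T. delta a (u, z) * delta u (x, y))"
  using coassoc_coords[OF coassoc[OF fs_ind] finite_layer] supp_delta_T[OF assms]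
  by (simp add: comult_ind)

definition comult4_coeff :: "'b \<Rightarrow> 'b \<Rightarrow> 'b \<Rightarrow> 'b \<Rightarrow> 'b \<Rightarrow> complex" where
  "comult4_coeff x a b c d = (\<Sum>p\<in>T. \<Sum>q\<in>T. delta x (p, q) * delta p (a, b) * delta q (c, d))"

lemma comult4_coeff_swap_halves: "comult4_coeff x a b c d = comult4_coeff x c d a b"
  unfolding comult4_coeff_def by (subst sum.swap) (simp add: cocomm[of x] mult_ac)

text \<open>Coassociativity turns the coefficient into one in which b and c are the two factors of a
  single coproduct; cocommutativity then swaps them.\<close>
lemma comult4_coeff_swap_middle:
  assumes x: "x \<in> layer 1"
  shows "comult4_coeff x a b c d = comult4_coeff x a c b d"
proof -
  have nested: "comult4_coeff x a b c d = (\<Sum>s\<in>T. delta x (a, s) * (\<Sum>t\<in>T. delta s (t, d) * delta t (b, c)))"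
    for b c
  proof -
    have "comult4_coeff x a b c d = (\<Sum>q\<in>T. (\<Sum>p\<in>T. delta x (p, q) * delta p (a, b)) * delta q (c, d))"
      unfolding comult4_coeff_def by (subst sum.swap) (simp add: sum_distrib_right)
    also have "\<dots> = (\<Sum>q\<in>T. (\<Sum>s\<in>T. delta x (a, s) * delta s (b, q)) * delta q (c, d))"
      using coassoc_basis[OF x, of a b] by simp
    also have "\<dots> = (\<Sum>s\<in>T. delta x (a, s) * (\<Sum>q\<in>T. delta s (b, q) * delta q (c, d)))"
      unfolding sum_distrib_right sum_distrib_left by (subst sum.swap) (simp add: mult.assoc)
    also have "\<dots> = (\<Sum>s\<in>T. delta x (a, s) * (\<Sum>t\<in>T. delta s (t, d) * delta t (b, c)))"
    proof (intro sum.cong refl)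
      fix s
      have "delta x (a, s) \<noteq> 0 \<Longrightarrow> s \<in> layer 2"
        using supp_delta_layer[OF x] by (auto simp: supp_def numeral_2_eq_2)
      then show "delta x (a, s) * (\<Sum>q\<in>T. delta s (b, q) * delta q (c, d)) =
          delta x (a, s) * (\<Sum>t\<in>T. delta s (t, d) * delta t (b, c))"
        using coassoc_basis[of s 2 b c d] by fastforce
    qed
    finally show ?thesis .
  qed
  show ?thesis
    by (simp add: nested cocomm[of _ b c])
qed

lemma comult4_coeff_perm:
  "x \<in> layer 1 \<Longrightarrow> comult4_coeff x v v' u u' = comult4_coeff x u v u' v'"
  using comult4_coeff_swap_halves[of x v v' u u'] comult4_coeff_swap_middle[of x u u' v v'] by simp

lemma comult2_m_eq: "comult2 delta m (x, y, z) = (\<Sum>u\<in>T. comult delta m (u, z) * delta u (x, y))"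
  unfolding comult2_def by (rule delta_id_eq_sum[OF finite_layer supp_comult_m_T])

lemma comult2_basis_eq:
  assumes "b \<in> layer n" "n \<le> 4"
  shows "comult2 delta (ind b) (x, y, z) = (\<Sum>s\<in>T. delta b (s, z) * delta s (x, y))"
  unfolding comult2_def comult_ind by (rule delta_id_eq_sum[OF finite_layer supp_delta_T[OF assms]])

lemma conv_coeff_comult4:
  "(\<Sum>x\<in>T. \<Sum>y\<in>T. comult2 delta m (x, y, z) * delta x (u, v) * delta y (u', v')) =
   (\<Sum>w\<in>T. comult delta m (w, z) * comult4_coeff w u v u' v')"
proof -
  have "(\<Sum>x\<in>T. \<Sum>y\<in>T. comult2 delta m (x, y, z) * delta x (u, v) * delta y (u', v')) =
      (\<Sum>x\<in>T. \<Sum>y\<in>T. \<Sum>w\<in>T.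
         comult delta m (w, z) * (delta w (x, y) * delta x (u, v) * delta y (u', v')))"
    unfolding comult2_m_eq by (simp add: sum_distrib_right sum_distrib_left mult_ac)
  also have "\<dots> = (\<Sum>w\<in>T. \<Sum>x\<in>T. \<Sum>y\<in>T.
         comult delta m (w, z) * (delta w (x, y) * delta x (u, v) * delta y (u', v')))"
    by (rule sum_move_inner_outside3)
  also have "\<dots> = (\<Sum>w\<in>T. comult delta m (w, z) * comult4_coeff w u v u' v')"
    unfolding comult4_coeff_def by (simp add: sum_distrib_left)
  finally show ?thesis .
qed

lemma EQ_A_coeff_comult4:
  "(\<Sum>b\<in>T. comult2 delta m (v, v', b) * comult2 delta (ind b) (u, u', z)) =
   (\<Sum>t\<in>T. comult delta m (t, z) * comult4_coeff t v v' u u')"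
proof -
  have "(\<Sum>b\<in>T. comult2 delta m (v, v', b) * comult2 delta (ind b) (u, u', z)) =
      (\<Sum>b\<in>T. comult2 delta m (v, v', b) * (\<Sum>s\<in>T. delta b (s, z) * delta s (u, u')))"
  proof (intro sum.cong refl)
    fix b
    show "comult2 delta m (v, v', b) * comult2 delta (ind b) (u, u', z) =
        comult2 delta m (v, v', b) * (\<Sum>s\<in>T. delta b (s, z) * delta s (u, u'))"
      using comult2_m_nonzero(3) comult2_basis_eq[of b 1] by fastforce
  qed
  also have "\<dots> = (\<Sum>b\<in>T. \<Sum>y\<in>T. \<Sum>s\<in>T.
      delta y (v, v') * delta s (u, u') * (comult delta m (y, b) * delta b (s, z)))"
    unfolding comult2_m_eq by (simp add: sum_distrib_right sum_distrib_left mult_ac)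
  also have "\<dots> = (\<Sum>y\<in>T. \<Sum>s\<in>T. \<Sum>b\<in>T.
      delta y (v, v') * delta s (u, u') * (comult delta m (y, b) * delta b (s, z)))"
    by (rule sum_move_inner_outside3[symmetric])
  also have "\<dots> = (\<Sum>y\<in>T. \<Sum>s\<in>T.
      delta y (v, v') * delta s (u, u') * (\<Sum>b\<in>T. comult delta m (y, b) * delta b (s, z)))"
    by (simp add: sum_distrib_left)
  also have "\<dots> = (\<Sum>y\<in>T. \<Sum>s\<in>T. \<Sum>t\<in>T.
      comult delta m (t, z) * (delta t (y, s) * delta y (v, v') * delta s (u, u')))"
    unfolding coassoc_m by (simp add: sum_distrib_left mult_ac)
  also have "\<dots> = (\<Sum>t\<in>T. \<Sum>y\<in>T. \<Sum>s\<in>T.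
      comult delta m (t, z) * (delta t (y, s) * delta y (v, v') * delta s (u, u')))"
    by (rule sum_move_inner_outside3)
  also have "\<dots> = (\<Sum>t\<in>T. comult delta m (t, z) * comult4_coeff t v v' u u')"
    unfolding comult4_coeff_def by (simp add: sum_distrib_left)
  finally show ?thesis .
qed

lemma conv_coeff_eq_EQ_A_coeff:
  "(\<Sum>x\<in>T. \<Sum>y\<in>T. comult2 delta m (x, y, z) * delta x (u, v) * delta y (u', v')) =
   (\<Sum>b\<in>T. comult2 delta m (v, v', b) * comult2 delta (ind b) (u, u', z))"
  unfolding conv_coeff_comult4 EQ_A_coeff_comult4
proof (intro sum.cong refl)
  fix t
  show "comult delta m (t, z) * comult4_coeff t u v u' v' = comult delta m (t, z) * comult4_coeff t v v' u u'"
    using supp_comult_m comult4_coeff_perm[of t v v' u u'] by (auto simp: supp_def)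
qed

context
  fixes iota :: "complex \<Rightarrow> 'a::comm_ring_1"
  assumes hom: "calg_hom iota"
begin

lemma EQ_eq_sum_T:
  assumes "supp (comult delta f) \<subseteq> layer n \<times> layer n" "n \<le> 3"
  shows "EQ iota delta r f z = (\<Sum>x\<in>T. \<Sum>y\<in>T. iota (comult2 delta f (x, y, z)) * r x y)"
proof (rule EQ_eq_sum[OF hom finite_layer])
  show "supp (comult delta f) \<subseteq> T \<times> T"
    using assms layer_mono[of n 5] by auto
  show "supp (delta u) \<subseteq> T \<times> T" if "comult delta f (u, w) \<noteq> 0" for u w
    using that assms supp_delta_T[of u n] by (auto simp: supp_def)
qed

lemma EQ_conv_expansion:
  "EQ iota delta (conv iota delta r1 r2) m z = (\<Sum>u\<in>T. \<Sum>v\<in>T. \<Sum>u'\<in>T. \<Sum>v'\<in>T.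
      iota (\<Sum>x\<in>T. \<Sum>y\<in>T. comult2 delta m (x, y, z) * delta x (u, v) * delta y (u', v')) *
      r1 u u' * r2 v v')"
proof -
  have "EQ iota delta (conv iota delta r1 r2) m z =
      (\<Sum>x\<in>T. \<Sum>y\<in>T. iota (comult2 delta m (x, y, z)) * conv iota delta r1 r2 x y)"
    by (rule EQ_eq_sum_T[OF supp_comult_m]) simp
  also have "\<dots> = (\<Sum>x\<in>T. \<Sum>y\<in>T. \<Sum>u\<in>T. \<Sum>v\<in>T. \<Sum>u'\<in>T. \<Sum>v'\<in>T.
      iota (comult2 delta m (x, y, z)) *
      (iota (delta x (u, v)) * iota (delta y (u', v')) * r1 u u' * r2 v v'))"
  proof (intro sum.cong refl)
    fix x y
    show "iota (comult2 delta m (x, y, z)) * conv iota delta r1 r2 x y =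
      (\<Sum>u\<in>T. \<Sum>v\<in>T. \<Sum>u'\<in>T. \<Sum>v'\<in>T. iota (comult2 delta m (x, y, z)) *
         (iota (delta x (u, v)) * iota (delta y (u', v')) * r1 u u' * r2 v v'))"
    proof (cases "comult2 delta m (x, y, z) = 0")
      case False
      then have "supp (delta x) \<subseteq> T \<times> T" "supp (delta y) \<subseteq> T \<times> T"
        using comult2_m_nonzero supp_delta_T[of _ 2] by auto
      then show ?thesis
        by (simp add: conv_eq_sum[OF hom finite_layer] sum_distrib_left)
    qed (simp add: calg_hom_zero[OF hom])
  qed
  also have "\<dots> = (\<Sum>u\<in>T. \<Sum>v\<in>T. \<Sum>u'\<in>T. \<Sum>v'\<in>T. \<Sum>x\<in>T. \<Sum>y\<in>T.
      iota (comult2 delta m (x, y, z)) *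
      (iota (delta x (u, v)) * iota (delta y (u', v')) * r1 u u' * r2 v v'))"
    by (rule sum_move_outer2_inside4)
  also have "\<dots> = (\<Sum>u\<in>T. \<Sum>v\<in>T. \<Sum>u'\<in>T. \<Sum>v'\<in>T.
      iota (\<Sum>x\<in>T. \<Sum>y\<in>T. comult2 delta m (x, y, z) * delta x (u, v) * delta y (u', v')) *
      r1 u u' * r2 v v')"
    by (simp add: calg_hom_sum[OF hom] calg_hom_mult[OF hom] sum_distrib_right sum_distrib_left mult_ac)
  finally show ?thesis .
qed

lemma EQ_A_EQ_expansion:
  "EQ_A iota delta r1 (EQ iota delta r2 m) z = (\<Sum>u\<in>T. \<Sum>v\<in>T. \<Sum>u'\<in>T. \<Sum>v'\<in>T.
      iota (\<Sum>b\<in>T. comult2 delta m (v, v', b) * comult2 delta (ind b) (u, u', z)) *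
      r1 u u' * r2 v v')"
proof -
  define E where "E = EQ iota delta r2 m"
  have E_eq: "E b = (\<Sum>v\<in>T. \<Sum>v'\<in>T. iota (comult2 delta m (v, v', b)) * r2 v v')" for b
    unfolding E_def by (rule EQ_eq_sum_T[OF supp_comult_m]) simp
  have E_zero: "E b = 0" if "b \<notin> layer 1" for b
  proof -
    have "comult2 delta m (v, v', b) = 0" for v v'
      using that comult2_m_nonzero(3) by blast
    then show ?thesis unfolding E_eq by (simp add: calg_hom_zero[OF hom])
  qed
  have "EQ_A iota delta r1 E z = (\<Sum>b\<in>T. E b * EQ iota delta r1 (ind b) z)"
    unfolding EQ_A_def
    by (rule sum_supp_superset[OF finite_layer]) (use E_zero layer_mono[of 1 5] in \<open>auto simp: supp_def\<close>)
  also have "\<dots> = (\<Sum>b\<in>T. (\<Sum>u\<in>T. \<Sum>u'\<in>T. iota (comult2 delta (ind b) (u, u', z)) * r1 u u') *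
        (\<Sum>v\<in>T. \<Sum>v'\<in>T. iota (comult2 delta m (v, v', b)) * r2 v v'))"
  proof (intro sum.cong refl)
    fix b
    show "E b * EQ iota delta r1 (ind b) z =
      (\<Sum>u\<in>T. \<Sum>u'\<in>T. iota (comult2 delta (ind b) (u, u', z)) * r1 u u') *
      (\<Sum>v\<in>T. \<Sum>v'\<in>T. iota (comult2 delta m (v, v', b)) * r2 v v')"
    proof (cases "b \<in> layer 1")
      case True
      have "EQ iota delta r1 (ind b) z =
          (\<Sum>u\<in>T. \<Sum>u'\<in>T. iota (comult2 delta (ind b) (u, u', z)) * r1 u u')"
        by (rule EQ_eq_sum_T[of _ 2]) (use supp_delta_layer[OF True] in \<open>simp_all add: comult_ind numeral_2_eq_2\<close>)
      then show ?thesis by (simp add: E_eq mult.commute)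
    qed (simp add: E_zero flip: E_eq)
  qed
  also have "\<dots> = (\<Sum>b\<in>T. \<Sum>u\<in>T. \<Sum>u'\<in>T. \<Sum>v\<in>T. \<Sum>v'\<in>T.
      iota (comult2 delta (ind b) (u, u', z)) * r1 u u' * (iota (comult2 delta m (v, v', b)) * r2 v v'))"
    by (simp only: sum_distrib_right, simp only: sum_distrib_left)
  also have "\<dots> = (\<Sum>u\<in>T. \<Sum>u'\<in>T. \<Sum>v\<in>T. \<Sum>v'\<in>T. \<Sum>b\<in>T.
      iota (comult2 delta (ind b) (u, u', z)) * r1 u u' * (iota (comult2 delta m (v, v', b)) * r2 v v'))"
    by (rule sum_move_outer_inside4)
  also have "\<dots> = (\<Sum>u\<in>T. \<Sum>v\<in>T. \<Sum>u'\<in>T. \<Sum>v'\<in>T. \<Sum>b\<in>T.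
      iota (comult2 delta (ind b) (u, u', z)) * r1 u u' * (iota (comult2 delta m (v, v', b)) * r2 v v'))"
    by (rule sum.cong[OF refl], rule sum.swap)
  also have "\<dots> = (\<Sum>u\<in>T. \<Sum>v\<in>T. \<Sum>u'\<in>T. \<Sum>v'\<in>T.
      iota (\<Sum>b\<in>T. comult2 delta m (v, v', b) * comult2 delta (ind b) (u, u', z)) *
      r1 u u' * r2 v v')"
    by (simp add: calg_hom_sum[OF hom] calg_hom_mult[OF hom] sum_distrib_right sum_distrib_left mult_ac)
  finally show ?thesis unfolding E_def .
qed

theorem EQ_conv: "EQ iota delta (conv iota delta r1 r2) m = EQ_A iota delta r1 (EQ iota delta r2 m)"
  by (rule ext) (simp only: EQ_conv_expansion EQ_A_EQ_expansion conv_coeff_eq_EQ_A_coeff)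

end

end

theorem lemma2p7:
  fixes mu :: "'b \<Rightarrow> 'b \<Rightarrow> 'b \<Rightarrow> complex" and one :: "'b \<Rightarrow> complex"
    and delta :: "'b \<Rightarrow> 'b \<times> 'b \<Rightarrow> complex" and eps :: "'b \<Rightarrow> complex"
    and S :: "'b \<Rightarrow> 'b \<Rightarrow> complex"
    and iota :: "complex \<Rightarrow> 'a::comm_ring_1"
    and r1 r2 r :: "'b \<Rightarrow> 'b \<Rightarrow> 'a"
    and m :: "'b \<Rightarrow> complex"
  assumes "hopf_algebra mu one delta eps S"
    and "commutative mu"
    and "cocommutative delta"
    and "calg_hom iota"
    and "bicharacter mu one delta eps iota r1"
    and "bicharacter mu one delta eps iota r2"
    and "r = conv iota delta r1 r2"
    and "fs m"
  shows "EQ iota delta r m = EQ_A iota delta r1 (EQ iota delta r2 m)"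
proof -
  have "cocomm_coalgebra_elt delta m"
    using assms(1,3,8) by unfold_locales (auto simp: hopf_algebra_def cocommutative_delta_symmetric)
  then show ?thesis
    using cocomm_coalgebra_elt.EQ_conv assms(4,7) by blast
qed

end
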